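(* In the setting of the context, suppose $\beta=\beta_0>1$. For $y\ge1$ let $\pi'(y)=\sum_{\tau:\ \lambda(\tau)\le y}\mathrm{tr}({}^t\Psi_\tau)$, the sum over periodic orbits $\tau$ of $\sigma$ with minimal period $\lambda(\tau)\le y$. Then for every $\gamma'>1$, $\frac{\pi'(y)}{\beta^{\gamma'y}}\to0$ as $y\to+\infty$.
   Context: $\Sigma=\{1,\dots,t\}^{\mathbb{N}}$, $\sigma$ the shift, $ix=(i,x_0,x_1,\dots)$. $\psi_1,\dots,\psi_t$ are affine bijections of $\mathbb{R}^d$ with $\max\mathrm{Lip}(\psi_i)<1$; $q\in\{1,\dots,d\}$; $(D\psi_i)_*$ is the pull-back on $q$-forms $\Lambda^q(\mathbb{R}^d)$ (inner product induced by the Euclidean one); $M^q$ = self-adjoint operators on $\Lambda^q$; $\Psi_i(A)={}^t(D\psi_i)_*A(D\psi_i)_*$, ${}^t\Psi_i(A)=(D\psi_i)_*A\,{}^t(D\psi_i)_*$. Assume $(ND_q)$: there is $\gamma>0$ such that for all $c,e\in\Lambda^q$ some $i$ has $|((D\psi_i)_*c,e)|\ge\gamma\|c\|\|e\|$. Then the operator $(\mathcal{L}_0A)(x)=\sum_{i=1}^t\Psi_i(A(ix))$ on $C(\Sigma,M^q)$ has a unique eigenvalue $\beta_0>0$ admitting an eigenfunction that is positive definite at every point. A periodic orbit $\tau$ is the set $\{x,\sigma(x),\dots,\sigma^{n-1}(x)\}$ of a point of minimal period $n=\lambda(\tau)$, and $\mathrm{tr}({}^t\Psi_\tau)=\mathrm{tr}({}^t\Psi_{x_0}\circ\dots\circ{}^t\Psi_{x_{n-1}})$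 for any $x\in\tau$ (independent of the choice). *)

theory Defs
  imports "HOL-Analysis.Analysis"
begin

text \<open>Sigma = {1..t}^N, realised as a subset of nat => nat (product topology
of the discrete nat, via the library instance for function spaces).\<close>

definition Sig :: "nat \<Rightarrow> (nat \<Rightarrow> nat) set" where
  "Sig t = {x. \<forall>n. x n \<in> {1..t}}"

definition shift :: "(nat \<Rightarrow> nat) \<Rightarrow> (nat \<Rightarrow> nat)" where
  "shift x = (\<lambda>n. x (Suc n))"

definition pcons :: "nat \<Rightarrow> (nat \<Rightarrow> nat) \<Rightarrow> (nat \<Rightarrow> nat)" where
  "pcons i x = case_nat i x"

section \<open>q-forms: coordinates in the orthonormal basis e^I, I a q-subset of the index type\<close>

definition qsets :: "nat \<Rightarrow> ('d::{finite,linorder}) set set" where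
  "qsets q = {I. card I = q}"

text \<open>Linear part (derivative) of an affine map.\<close>
definition Dlin :: "(real^('d::{finite,linorder}) \<Rightarrow> real^('d::{finite,linorder})) \<Rightarrow> real^('d::{finite,linorder}) \<Rightarrow> real^('d::{finite,linorder})" where
  "Dlin f = (\<lambda>v. f v - f 0)"

definition affine_bij :: "(real^('d::{finite,linorder}) \<Rightarrow> real^('d::{finite,linorder})) \<Rightarrow> bool" where
  "affine_bij f \<longleftrightarrow> bij f \<and> (\<exists>L c. linear L \<and> f = (\<lambda>x. L x + c))"

text \<open>Minor det L[I,J] (rows I, columns J, both in increasing order), Leibniz formula.\<close>
definition minor :: "(real^('d::{finite,linorder}) \<Rightarrow> real^('d::{finite,linorder})) \<Rightarrow> ('d::{finite,linorder}) set \<Rightarrow> ('d::{finite,linorder}) set \<Rightarrow> real" where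
  "minor L I J = (let q = card I; rI = sorted_list_of_set I; cJ = sorted_list_of_set J in
     (\<Sum>p\<in>{p. p permutes {..<q}}. of_int (sign p) *
        (\<Prod>a<q. (L (axis (cJ ! p a) 1)) $ (rI ! a))))"

text \<open>Matrix of the pull-back L_* on q-forms: L_* e^I = sum_J det L[I,J] e^J,
  so the (J,I) entry is det L[I,J].\<close>
definition pullback :: "(real^('d::{finite,linorder}) \<Rightarrow> real^('d::{finite,linorder})) \<Rightarrow> ('d::{finite,linorder}) set \<Rightarrow> ('d::{finite,linorder}) set \<Rightarrow> real" where
  "pullback L J I = minor L I J"

definition qapply :: "nat \<Rightarrow> (('d::{finite,linorder}) set \<Rightarrow> ('d::{finite,linorder}) set \<Rightarrow> real) \<Rightarrow> (('d::{finite,linorder}) set \<Rightarrow> real) \<Rightarrow> (('d::{finite,linorder}) set \<Rightarrow> real)" where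
  "qapply q P c = (\<lambda>J. \<Sum>I\<in>qsets q. P J I * c I)"

definition qinner :: "nat \<Rightarrow> (('d::{finite,linorder}) set \<Rightarrow> real) \<Rightarrow> (('d::{finite,linorder}) set \<Rightarrow> real) \<Rightarrow> real" where
  "qinner q c e = (\<Sum>J\<in>qsets q. c J * e J)"

definition qnorm :: "nat \<Rightarrow> (('d::{finite,linorder}) set \<Rightarrow> real) \<Rightarrow> real" where
  "qnorm q c = sqrt (qinner q c c)"

definition ND :: "nat \<Rightarrow> nat \<Rightarrow> (nat \<Rightarrow> real^('d::{finite,linorder}) \<Rightarrow> real^('d::{finite,linorder})) \<Rightarrow> ('d::{finite,linorder}) itself \<Rightarrow> bool" where
  "ND t q \<psi> _ \<longleftrightarrow> (\<exists>\<gamma>>0. \<forall>(c::('d::{finite,linorder}) set \<Rightarrow> real) e. \<exists>i\<in>{1..t}.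
      \<bar>qinner q (qapply q (pullback (Dlin (\<psi> i))) c) e\<bar> \<ge> \<gamma> * qnorm q c * qnorm q e)"

section \<open>Operators on M^q (self-adjoint operators on Lambda^q, as symmetric matrices)\<close>

type_synonym 'd qmat = "('d::{finite,linorder}) set \<Rightarrow> ('d::{finite,linorder}) set \<Rightarrow> real"

definition qsym :: "nat \<Rightarrow> ('d::{finite,linorder}) qmat \<Rightarrow> bool" where
  "qsym q A \<longleftrightarrow> (\<forall>I\<in>qsets q. \<forall>J\<in>qsets q. A I J = A J I)"

definition qposdef :: "nat \<Rightarrow> ('d::{finite,linorder}) qmat \<Rightarrow> bool" where
  "qposdef q A \<longleftrightarrow> qsym q A \<and>
     (\<forall>c. (\<exists>I\<in>qsets q. c I \<noteq> 0) \<longrightarrow> (\<Sum>I\<in>qsets q. \<Sum>J\<in>qsets q. c I * A I J * c J) > 0)"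

definition PsiOp :: "nat \<Rightarrow> (real^('d::{finite,linorder}) \<Rightarrow> real^('d::{finite,linorder})) \<Rightarrow> (('d::{finite,linorder})) qmat \<Rightarrow> ('d::{finite,linorder}) qmat" where
  "PsiOp q f A = (let P = pullback (Dlin f) in
     (\<lambda>I J. \<Sum>K\<in>qsets q. \<Sum>L\<in>qsets q. P K I * A K L * P L J))"

definition tPsiOp :: "nat \<Rightarrow> (real^('d::{finite,linorder}) \<Rightarrow> real^('d::{finite,linorder})) \<Rightarrow> (('d::{finite,linorder})) qmat \<Rightarrow> ('d::{finite,linorder}) qmat" where
  "tPsiOp q f A = (let P = pullback (Dlin f) in
     (\<lambda>I J. \<Sum>K\<in>qsets q. \<Sum>L\<in>qsets q. P I K * A K L * P J L))"

definition L0 :: "nat \<Rightarrow> nat \<Rightarrow> (nat \<Rightarrow> real^('d::{finite,linorder}) \<Rightarrow> real^('d::{finite,linorder})) \<Rightarrow> ((nat \<Rightarrow> nat) \<Rightarrow> (('d::{finite,linorder})) qmat)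
     \<Rightarrow> (nat \<Rightarrow> nat) \<Rightarrow> ('d::{finite,linorder}) qmat" where
  "L0 t q \<psi> A x = (\<lambda>I J. \<Sum>i=1..t. PsiOp q (\<psi> i) (A (pcons i x)) I J)"

definition pos_eigen :: "nat \<Rightarrow> nat \<Rightarrow> (nat \<Rightarrow> real^('d::{finite,linorder}) \<Rightarrow> real^('d::{finite,linorder})) \<Rightarrow> ('d::{finite,linorder}) itself \<Rightarrow> real \<Rightarrow> bool" where
  "pos_eigen t q \<psi> _ \<beta> \<longleftrightarrow> (\<exists>A :: (nat \<Rightarrow> nat) \<Rightarrow> ('d::{finite,linorder}) qmat.
      (\<forall>I\<in>qsets q. \<forall>J\<in>qsets q. continuous_on (Sig t) (\<lambda>x. A x I J)) \<and>
      (\<forall>x\<in>Sig t. qposdef q (A x)) \<and>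
      (\<forall>x\<in>Sig t. \<forall>I\<in>qsets q. \<forall>J\<in>qsets q. L0 t q \<psi> A x I J = \<beta> * A x I J))"

text \<open>Orthonormal basis of M^q (Frobenius inner product), indexed by the sets {I,J}.\<close>
definition symbasis :: "('d::{finite,linorder}) set set \<Rightarrow> (('d::{finite,linorder})) qmat" where
  "symbasis s = (\<lambda>K L. if {K, L} = s then (if K = L then 1 else 1 / sqrt 2) else 0)"

definition frob :: "nat \<Rightarrow> ('d::{finite,linorder}) qmat \<Rightarrow> ('d::{finite,linorder}) qmat \<Rightarrow> real" where
  "frob q A B = (\<Sum>K\<in>qsets q. \<Sum>L\<in>qsets q. A K L * B K L)"

definition Mtrace :: "nat \<Rightarrow> (('d::{finite,linorder}) qmat \<Rightarrow> ('d::{finite,linorder}) qmat) \<Rightarrow> real" where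
  "Mtrace q T = (\<Sum>s\<in>{{K, L} | K L. K \<in> qsets q \<and> L \<in> qsets q}.
      frob q (symbasis s) (T (symbasis s)))"

primrec tPsiWord :: "nat \<Rightarrow> (nat \<Rightarrow> real^('d::{finite,linorder}) \<Rightarrow> real^('d::{finite,linorder})) \<Rightarrow> (nat \<Rightarrow> nat) \<Rightarrow> nat
     \<Rightarrow> (('d::{finite,linorder})) qmat \<Rightarrow> ('d::{finite,linorder}) qmat" where
  "tPsiWord q \<psi> x 0 A = A"
| "tPsiWord q \<psi> x (Suc n) A = tPsiOp q (\<psi> (x 0)) (tPsiWord q \<psi> (shift x) n A)"

definition min_period :: "(nat \<Rightarrow> nat) \<Rightarrow> nat" where
  "min_period x = (LEAST n. n > 0 \<and> (shift ^^ n) x = x)"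

definition per_orbits :: "nat \<Rightarrow> (nat \<Rightarrow> nat) set set" where
  "per_orbits t = {{(shift ^^ k) x | k. k < min_period x} | x.
      x \<in> Sig t \<and> (\<exists>n>0. (shift ^^ n) x = x)}"

definition orb_rep :: "(nat \<Rightarrow> nat) set \<Rightarrow> nat \<Rightarrow> nat" where
  "orb_rep \<tau> = (SOME x. x \<in> \<tau>)"

definition orb_len :: "(nat \<Rightarrow> nat) set \<Rightarrow> nat" where
  "orb_len \<tau> = min_period (orb_rep \<tau>)"

definition orb_trace :: "nat \<Rightarrow> (nat \<Rightarrow> real^('d::{finite,linorder}) \<Rightarrow> real^('d::{finite,linorder})) \<Rightarrow> ('d::{finite,linorder}) itself
     \<Rightarrow> (nat \<Rightarrow> nat) set \<Rightarrow> real" where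
  "orb_trace q \<psi> _ \<tau> = Mtrace q (tPsiWord q \<psi> (orb_rep \<tau>) (orb_len \<tau>) :: ('d::{finite,linorder}) qmat \<Rightarrow> ('d::{finite,linorder}) qmat)"

definition pi' :: "nat \<Rightarrow> nat \<Rightarrow> (nat \<Rightarrow> real^('d::{finite,linorder}) \<Rightarrow> real^('d::{finite,linorder})) \<Rightarrow> ('d::{finite,linorder}) itself \<Rightarrow> real \<Rightarrow> real" where
  "pi' t q \<psi> D y = (\<Sum>\<tau>\<in>{\<tau>\<in>per_orbits t. real (orb_len \<tau>) \<le> y}. orb_trace q \<psi> D \<tau>)"

end

theory Submission imports Defs begin

text \<open>Iterating the eigen-equation \<open>n\<close> times shows that, for every \<open>x\<close>, the sum over the words
  \<open>w\<close> of length \<open>n\<close> of \<open>P_w\<^sup>t A(wx) P_w\<close> equals \<open>\<beta>\<^sup>n A(x)\<close>, where \<open>P_w\<close> is the product of the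
  pull-backs \<open>(D\<psi>\<^sub>i)\<^sub>*\<close> along \<open>w\<close>. A continuous, pointwise positive definite \<open>A\<close> on the compact
  space \<open>\<Sigma>\<close> is uniformly positive definite, so taking traces bounds the sum of \<open>\<parallel>P_w\<parallel>\<^sup>2\<close> over
  the words of length \<open>n\<close> by a constant times \<open>\<beta>\<^sup>n\<close>. Since \<open>\<^sup>t\<Psi>\<^sub>\<tau>\<close> is \<open>E \<mapsto> P_w E P_w\<^sup>t\<close> for the
  word \<open>w\<close> read off one period of \<open>\<tau>\<close>, its trace is at most a constant times \<open>\<parallel>P_w\<parallel>\<^sup>2\<close>, and
  distinct orbits give distinct words. Hence \<open>\<pi>'(y) = O(\<beta>\<^sup>y) = o(\<beta>\<^sup>\<gamma>\<^sup>'\<^sup>y)\<close>.\<close>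

definition mat_mul :: "'k set \<Rightarrow> ('k \<Rightarrow> 'k \<Rightarrow> real) \<Rightarrow> ('k \<Rightarrow> 'k \<Rightarrow> real) \<Rightarrow> 'k \<Rightarrow> 'k \<Rightarrow> real" where
  "mat_mul Q A B = (\<lambda>I J. \<Sum>K\<in>Q. A I K * B K J)"

definition mat_transp :: "('k \<Rightarrow> 'k \<Rightarrow> real) \<Rightarrow> 'k \<Rightarrow> 'k \<Rightarrow> real" where
  "mat_transp A = (\<lambda>I J. A J I)"

definition mat_one :: "'k \<Rightarrow> 'k \<Rightarrow> real" where
  "mat_one = (\<lambda>I J. if I = J then 1 else 0)"

definition sandwich :: "'k set \<Rightarrow> ('k \<Rightarrow> 'k \<Rightarrow> real) \<Rightarrow> ('k \<Rightarrow> 'k \<Rightarrow> real) \<Rightarrow> 'k \<Rightarrow> 'k \<Rightarrow> real" where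
  "sandwich Q R B = mat_mul Q (mat_mul Q (mat_transp R) B) R"

definition mat_trace :: "'k set \<Rightarrow> ('k \<Rightarrow> 'k \<Rightarrow> real) \<Rightarrow> real" where
  "mat_trace Q A = (\<Sum>J\<in>Q. A J J)"

definition frob_sq :: "'k set \<Rightarrow> ('k \<Rightarrow> 'k \<Rightarrow> real) \<Rightarrow> real" where
  "frob_sq Q R = (\<Sum>K\<in>Q. \<Sum>J\<in>Q. (R K J)\<^sup>2)"

lemma mat_mul_assoc: "mat_mul Q (mat_mul Q A B) C = mat_mul Q A (mat_mul Q B C)"
  unfolding mat_mul_def
  by (intro ext) (simp add: sum_distrib_right sum_distrib_left mult.assoc, rule sum.swap)

lemma mat_transp_mul: "mat_transp (mat_mul Q A B) = mat_mul Q (mat_transp B) (mat_transp A)"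
  unfolding mat_mul_def mat_transp_def by (simp add: mult.commute)

lemma mat_transp_one [simp]: "mat_transp mat_one = mat_one"
  unfolding mat_transp_def mat_one_def by (auto simp: eq_commute)

lemma sandwich_sandwich: "sandwich Q R (sandwich Q S B) = sandwich Q (mat_mul Q S R) B"
  unfolding sandwich_def by (simp add: mat_mul_assoc mat_transp_mul)

lemma sandwich_cong:
  "\<forall>K\<in>Q. \<forall>L\<in>Q. B K L = B' K L \<Longrightarrow> sandwich Q R B = sandwich Q R B'"
  unfolding sandwich_def mat_mul_def by simp

lemma sandwich_one:
  assumes "finite Q" "I \<in> Q" "J \<in> Q"
  shows "sandwich Q mat_one E I J = E I J"
  using assms unfolding sandwich_def mat_mul_def mat_one_def mat_transp_def
  by (simp add: if_distrib[of "\<lambda>z. z * _"] if_distrib[of "\<lambda>z. _ * z"] cong: if_cong)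

lemma sandwich_sum:
  "(\<Sum>i\<in>S. sandwich Q R (B i) I J) = sandwich Q R (\<lambda>K L. \<Sum>i\<in>S. B i K L) I J"
proof -
  have "(\<Sum>i\<in>S. \<Sum>L\<in>Q. \<Sum>K\<in>Q. f i K L) = (\<Sum>L\<in>Q. \<Sum>K\<in>Q. \<Sum>i\<in>S. f i K L)"
    for f :: "_ \<Rightarrow> _ \<Rightarrow> _ \<Rightarrow> real"
    by (subst sum.swap) (simp only: sum.swap[of _ S])
  then show ?thesis
    unfolding sandwich_def mat_mul_def sum_distrib_right sum_distrib_left by (simp only:)
qed

lemma sandwich_scale: "sandwich Q R (\<lambda>K L. c * B K L) I J = c * sandwich Q R B I J"
  unfolding sandwich_def mat_mul_def by (simp add: sum_distrib_right sum_distrib_left mult_ac)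

lemma PsiOp_eq_sandwich: "PsiOp q f = sandwich (qsets q) (pullback (Dlin f))"
  unfolding PsiOp_def sandwich_def mat_mul_def mat_transp_def Let_def
  by (intro ext) (simp add: sum_distrib_right, rule sum.swap)

lemma tPsiOp_eq_sandwich: "tPsiOp q f = sandwich (qsets q) (mat_transp (pullback (Dlin f)))"
  unfolding tPsiOp_def sandwich_def mat_mul_def mat_transp_def Let_def
  by (intro ext) (simp add: sum_distrib_right, rule sum.swap)

primrec word_prod :: "'k set \<Rightarrow> (nat \<Rightarrow> 'k \<Rightarrow> 'k \<Rightarrow> real) \<Rightarrow> nat list \<Rightarrow> 'k \<Rightarrow> 'k \<Rightarrow> real" where
  "word_prod Q P [] = mat_one"
| "word_prod Q P (i # w) = mat_mul Q (P i) (word_prod Q P w)"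

abbreviation pullback_word ::
    "nat \<Rightarrow> (nat \<Rightarrow> real^('d::{finite,linorder}) \<Rightarrow> real^('d::{finite,linorder}))
      \<Rightarrow> nat list \<Rightarrow> ('d::{finite,linorder}) qmat" where
  "pullback_word q \<psi> \<equiv> word_prod (qsets q) (\<lambda>i. pullback (Dlin (\<psi> i)))"

lemma tPsiWord_eq_sandwich:
  "\<forall>I\<in>qsets q. \<forall>J\<in>qsets q.
     tPsiWord q \<psi> x n E I J = sandwich (qsets q) (mat_transp (pullback_word q \<psi> (map x [0..<n]))) E I J"
proof (induction n arbitrary: x)
  case 0
  show ?case by (simp add: sandwich_one)
next
  case (Suc n)
  let ?Q = "qsets q" and ?P = "pullback (Dlin (\<psi> (x 0)))"
  let ?R = "pullback_word q \<psi> (map (shift x) [0..<n])"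
  have "tPsiWord q \<psi> x (Suc n) E = sandwich ?Q (mat_transp ?P) (tPsiWord q \<psi> (shift x) n E)"
    by (simp add: tPsiOp_eq_sandwich)
  also have "\<dots> = sandwich ?Q (mat_transp ?P) (sandwich ?Q (mat_transp ?R) E)"
    by (rule sandwich_cong) (use Suc.IH[of "shift x"] in auto)
  also have "\<dots> = sandwich ?Q (mat_transp (mat_mul ?Q ?P ?R)) E"
    by (simp add: sandwich_sandwich mat_transp_mul)
  finally show ?case
    by (simp add: map_upt_Suc shift_def del: upt_Suc)
qed

definition words :: "nat \<Rightarrow> nat \<Rightarrow> nat list set" where
  "words t n = {w. set w \<subseteq> {1..t} \<and> length w = n}"

definition prepend :: "nat list \<Rightarrow> (nat \<Rightarrow> nat) \<Rightarrow> nat \<Rightarrow> nat" where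
  "prepend w x = foldr pcons w x"

lemma finite_words: "finite (words t n)"
  unfolding words_def by (rule finite_lists_length_eq) simp

lemma sum_words_Suc: "(\<Sum>w\<in>words t (Suc n). f w) = (\<Sum>w\<in>words t n. \<Sum>i=1..t. f (i # w))"
proof -
  have "words t (Suc n) = (\<lambda>(w, i). i # w) ` (words t n \<times> {1..t})"
    unfolding words_def by (rule lists_length_Suc_eq)
  moreover have "inj_on (\<lambda>(w, i). i # w) (words t n \<times> {1..t})"
    by (auto simp: inj_on_def)
  ultimately show ?thesis
    by (simp add: sum.reindex sum.cartesian_product split_def)
qed

lemma pcons_Sig: "i \<in> {1..t} \<Longrightarrow> x \<in> Sig t \<Longrightarrow> pcons i x \<in> Sig t"
  unfolding Sig_def pcons_def by (auto split: nat.split)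

lemma prepend_Sig: "set w \<subseteq> {1..t} \<Longrightarrow> x \<in> Sig t \<Longrightarrow> prepend w x \<in> Sig t"
  by (induction w) (auto simp: prepend_def pcons_Sig)

lemma eigen_sum_words:
  assumes eig: "\<forall>x\<in>Sig t. \<forall>I\<in>Q. \<forall>J\<in>Q.
      (\<Sum>i=1..t. sandwich Q (P i) (A (pcons i x)) I J) = \<beta> * A x I J"
    and "finite Q" "x \<in> Sig t"
  shows "\<forall>I\<in>Q. \<forall>J\<in>Q.
    (\<Sum>w\<in>words t n. sandwich Q (word_prod Q P w) (A (prepend w x)) I J) = \<beta> ^ n * A x I J"
proof (induction n)
  case 0
  have "words t 0 = {[]}" unfolding words_def by auto
  then show ?case using assms by (simp add: prepend_def sandwich_one)
next
  case (Suc n)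
  have step: "(\<Sum>i=1..t. sandwich Q (word_prod Q P (i # w)) (A (prepend (i # w) x)) I J)
      = \<beta> * sandwich Q (word_prod Q P w) (A (prepend w x)) I J" if "w \<in> words t n" for w I J
  proof -
    let ?R = "word_prod Q P w" and ?y = "prepend w x"
    have y: "?y \<in> Sig t" using that \<open>x \<in> Sig t\<close> prepend_Sig unfolding words_def by auto
    have "(\<Sum>i=1..t. sandwich Q (word_prod Q P (i # w)) (A (prepend (i # w) x)) I J)
        = sandwich Q ?R (\<lambda>K L. \<Sum>i=1..t. sandwich Q (P i) (A (pcons i ?y)) K L) I J"
      by (simp add: prepend_def sandwich_sandwich[symmetric] sandwich_sum)
    also have "\<dots> = sandwich Q ?R (\<lambda>K L. \<beta> * A ?y K L) I J"
      by (rule arg_cong[where f = "\<lambda>M. M I J"], rule sandwich_cong) (use eig y in auto)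
    finally show ?thesis by (simp add: sandwich_scale)
  qed
  show ?case
  proof (intro ballI)
    fix I J assume "I \<in> Q" "J \<in> Q"
    have "(\<Sum>w\<in>words t (Suc n). sandwich Q (word_prod Q P w) (A (prepend w x)) I J)
        = (\<Sum>w\<in>words t n. \<beta> * sandwich Q (word_prod Q P w) (A (prepend w x)) I J)"
      unfolding sum_words_Suc by (rule sum.cong[OF refl]) (rule step)
    also have "\<dots> = \<beta> ^ Suc n * A x I J"
      using Suc.IH \<open>I \<in> Q\<close> \<open>J \<in> Q\<close> by (simp add: sum_distrib_left[symmetric])
    finally show "(\<Sum>w\<in>words t (Suc n). sandwich Q (word_prod Q P w) (A (prepend w x)) I J)
        = \<beta> ^ Suc n * A x I J" .
  qed
qed

lemma compact_Sig: "compact (Sig t)"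
proof -
  have "Sig t = PiE UNIV (\<lambda>_. {1..t})"
    unfolding Sig_def PiE_def Pi_def extensional_def by auto
  moreover have "compactin (product_topology (\<lambda>_. euclidean) UNIV) (PiE UNIV (\<lambda>_::nat. {1..t::nat}))"
    unfolding compactin_PiE by (simp add: finite_imp_compact)
  ultimately show ?thesis
    unfolding euclidean_product_topology by simp
qed

lemma quadratic_form_ge_of_unit_sphere:
  fixes B :: "'k::finite \<Rightarrow> 'k \<Rightarrow> real"
  assumes unit: "\<forall>u::real^'k. norm u = 1 \<longrightarrow> (\<forall>K. K \<notin> Q \<longrightarrow> u $ K = 0) \<longrightarrow>
      c \<le> (\<Sum>I\<in>Q. \<Sum>J\<in>Q. u $ I * B I J * u $ J)"
  shows "c * (\<Sum>I\<in>Q. (v I)\<^sup>2) \<le> (\<Sum>I\<in>Q. \<Sum>J\<in>Q. v I * B I J * v J)"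
proof (cases "\<forall>I\<in>Q. v I = 0")
  case True
  then show ?thesis by simp
next
  case False
  then obtain I0 where "I0 \<in> Q" "v I0 \<noteq> 0" by blast
  define r where "r = sqrt (\<Sum>I\<in>Q. (v I)\<^sup>2)"
  have "0 < (v I0)\<^sup>2" using \<open>v I0 \<noteq> 0\<close> by simp
  also have "\<dots> \<le> (\<Sum>I\<in>Q. (v I)\<^sup>2)" using \<open>I0 \<in> Q\<close> by (intro member_le_sum) auto
  finally have "r > 0" unfolding r_def by simp
  have r2: "r\<^sup>2 = (\<Sum>I\<in>Q. (v I)\<^sup>2)" unfolding r_def by (simp add: sum_nonneg)
  define u where "u = (\<chi> K. if K \<in> Q then v K / r else 0)"
  have "(norm u)\<^sup>2 = (\<Sum>K\<in>Q. (v K / r)\<^sup>2)"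
    unfolding power2_norm_eq_inner inner_vec_def u_def
    by (simp add: if_distrib[of "\<lambda>z. z * _"] sum.If_cases power2_eq_square)
  also have "\<dots> = 1" using \<open>r > 0\<close> by (simp add: power_divide sum_divide_distrib[symmetric] r2[symmetric])
  finally have "norm u = 1" using norm_ge_zero[of u] by (auto simp: power2_eq_1_iff)
  then have "c \<le> (\<Sum>I\<in>Q. \<Sum>J\<in>Q. u $ I * B I J * u $ J)"
    using unit unfolding u_def by auto
  also have "\<dots> = (\<Sum>I\<in>Q. \<Sum>J\<in>Q. v I * B I J * v J) / r\<^sup>2"
    unfolding u_def by (simp add: sum_divide_distrib power2_eq_square)
  finally show ?thesis using \<open>r > 0\<close> by (simp add: le_divide_eq mult.commute flip: r2)
qed

lemma uniformly_posdef_on_compact: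
  fixes A :: "'a::topological_space \<Rightarrow> 'k::finite \<Rightarrow> 'k \<Rightarrow> real"
  assumes "compact S"
    and cont: "\<forall>I\<in>Q. \<forall>J\<in>Q. continuous_on S (\<lambda>x. A x I J)"
    and pd: "\<forall>x\<in>S. \<forall>v. (\<exists>I\<in>Q. v I \<noteq> 0) \<longrightarrow> 0 < (\<Sum>I\<in>Q. \<Sum>J\<in>Q. v I * A x I J * v J)"
  obtains c where "c > 0"
    "\<forall>x\<in>S. \<forall>v. c * (\<Sum>I\<in>Q. (v I)\<^sup>2) \<le> (\<Sum>I\<in>Q. \<Sum>J\<in>Q. v I * A x I J * v J)"
proof (cases "S = {} \<or> Q = {}")
  case True
  then show ?thesis by (intro that[of 1]) auto
next
  case False
  define form where "form p = (\<Sum>I\<in>Q. \<Sum>J\<in>Q. snd p $ I * A (fst p) I J * snd p $ J)"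
    for p :: "'a \<times> (real^'k)"
  define U where "U = {u::real^'k. norm u = 1 \<and> (\<forall>K. K \<notin> Q \<longrightarrow> u $ K = 0)}"
  have "U = sphere 0 1 \<inter> (\<Inter>K\<in>-Q. {u. u $ K = 0})"
    unfolding U_def by auto
  moreover have "closed (\<Inter>K\<in>-Q. {u::real^'k. u $ K = 0})"
    by (intro closed_INT ballI closed_Collect_eq continuous_intros)
  ultimately have "compact U" by (simp add: compact_Int_closed)
  obtain K0 where "K0 \<in> Q" using False by auto
  then have "axis K0 1 \<in> U"
    unfolding U_def using norm_axis_1[of K0] by (auto simp: axis_def simp del: norm_axis_1)
  then have "S \<times> U \<noteq> {}" using False by auto
  have "continuous_on (S \<times> U) form"
    unfolding form_def
    by (intro continuous_intros continuous_on_compose2[OF cont[rule_format]]) auto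
  then obtain p0 where p0: "p0 \<in> S \<times> U" "\<forall>p\<in>S \<times> U. form p0 \<le> form p"
    using continuous_attains_inf[OF compact_Times[OF \<open>compact S\<close> \<open>compact U\<close>] \<open>S \<times> U \<noteq> {}\<close>] by blast
  have "\<exists>I\<in>Q. snd p0 $ I \<noteq> 0"
  proof (rule ccontr)
    assume "\<not> ?thesis"
    then have "snd p0 = 0" using p0(1) unfolding U_def by (auto simp: vec_eq_iff)
    then show False using p0(1) unfolding U_def by auto
  qed
  then have "form p0 > 0"
    unfolding form_def using pd[rule_format, of "fst p0" "\<lambda>K. snd p0 $ K"] p0(1) by auto
  moreover have "form p0 * (\<Sum>I\<in>Q. (v I)\<^sup>2) \<le> (\<Sum>I\<in>Q. \<Sum>J\<in>Q. v I * A x I J * v J)"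
    if "x \<in> S" for x v
    using p0(2) that unfolding U_def form_def
    by (intro quadratic_form_ge_of_unit_sphere) auto
  ultimately show ?thesis using that by blast
qed

lemma trace_sandwich_ge:
  assumes "\<forall>v. c * (\<Sum>I\<in>Q. (v I)\<^sup>2) \<le> (\<Sum>I\<in>Q. \<Sum>J\<in>Q. v I * B I J * v J)"
  shows "c * frob_sq Q R \<le> mat_trace Q (sandwich Q R B)"
proof -
  have "c * frob_sq Q R = (\<Sum>J\<in>Q. c * (\<Sum>K\<in>Q. (R K J)\<^sup>2))"
    unfolding frob_sq_def sum_distrib_left by (rule sum.swap)
  also have "\<dots> \<le> (\<Sum>J\<in>Q. \<Sum>K\<in>Q. \<Sum>L\<in>Q. R K J * B K L * R L J)"
    using assms by (intro sum_mono) auto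
  also have "\<dots> = mat_trace Q (sandwich Q R B)"
    unfolding mat_trace_def sandwich_def mat_mul_def mat_transp_def sum_distrib_right
    by (rule sum.cong[OF refl], rule sum.swap)
  finally show ?thesis .
qed

lemma pos_eigen_sum_words_le:
  fixes \<psi> :: "nat \<Rightarrow> real^('d::{finite,linorder}) \<Rightarrow> real^('d::{finite,linorder})"
  assumes "pos_eigen t q \<psi> TYPE('d) \<beta>" "t > 0"
  obtains K where "\<forall>n. (\<Sum>w\<in>words t n. frob_sq (qsets q) (pullback_word q \<psi> w)) \<le> K * \<beta> ^ n"
proof -
  let ?Q = "qsets q :: 'd set set" and ?P = "\<lambda>i. pullback (Dlin (\<psi> i))"
  obtain A :: "(nat \<Rightarrow> nat) \<Rightarrow> 'd qmat" where
    cont: "\<forall>I\<in>?Q. \<forall>J\<in>?Q. continuous_on (Sig t) (\<lambda>x. A x I J)" and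
    pd: "\<forall>x\<in>Sig t. qposdef q (A x)" and
    eig: "\<forall>x\<in>Sig t. \<forall>I\<in>?Q. \<forall>J\<in>?Q. L0 t q \<psi> A x I J = \<beta> * A x I J"
    using assms(1) unfolding pos_eigen_def by blast
  obtain c where "c > 0" and
    c: "\<forall>x\<in>Sig t. \<forall>v. c * (\<Sum>I\<in>?Q. (v I)\<^sup>2) \<le> (\<Sum>I\<in>?Q. \<Sum>J\<in>?Q. v I * A x I J * v J)"
    using uniformly_posdef_on_compact[OF compact_Sig cont] pd unfolding qposdef_def by blast
  define x0 where "x0 = (\<lambda>_::nat. 1::nat)"
  have "x0 \<in> Sig t" using \<open>t > 0\<close> unfolding x0_def Sig_def by auto
  have "c * (\<Sum>w\<in>words t n. frob_sq ?Q (pullback_word q \<psi> w)) \<le> \<beta> ^ n * mat_trace ?Q (A x0)" for n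
  proof -
    let ?M = "\<lambda>w. sandwich ?Q (pullback_word q \<psi> w) (A (prepend w x0))"
    have "c * (\<Sum>w\<in>words t n. frob_sq ?Q (pullback_word q \<psi> w)) \<le> (\<Sum>w\<in>words t n. mat_trace ?Q (?M w))"
      unfolding sum_distrib_left
      using c \<open>x0 \<in> Sig t\<close> prepend_Sig unfolding words_def
      by (intro sum_mono trace_sandwich_ge) auto
    also have "\<dots> = (\<Sum>J\<in>?Q. \<Sum>w\<in>words t n. ?M w J J)"
      unfolding mat_trace_def by (rule sum.swap)
    also have "\<dots> = \<beta> ^ n * mat_trace ?Q (A x0)"
      using eigen_sum_words[of t ?Q ?P A \<beta> x0 n] eig \<open>x0 \<in> Sig t\<close>
      unfolding mat_trace_def L0_def PsiOp_eq_sandwich by (simp add: sum_distrib_left)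
    finally show ?thesis .
  qed
  then show ?thesis
    using \<open>c > 0\<close> by (intro that[of "mat_trace ?Q (A x0) / c"]) (simp add: field_simps)
qed

lemma abs_sandwich_transp_le:
  assumes "\<forall>M N. \<bar>E M N\<bar> \<le> 1"
  shows "\<bar>sandwich Q (mat_transp R) E K L\<bar> \<le> (\<Sum>M\<in>Q. \<bar>R K M\<bar>) * (\<Sum>N\<in>Q. \<bar>R L N\<bar>)"
proof -
  have term_le: "\<bar>R K M * E M N * R L N\<bar> \<le> \<bar>R K M\<bar> * \<bar>R L N\<bar>" for M N
  proof -
    have "\<bar>R K M\<bar> * \<bar>E M N\<bar> \<le> \<bar>R K M\<bar>"
      using assms by (intro mult_left_le) auto
    then show ?thesis by (simp add: abs_mult mult_right_mono)
  qed
  have "\<bar>sandwich Q (mat_transp R) E K L\<bar> = \<bar>\<Sum>N\<in>Q. \<Sum>M\<in>Q. R K M * E M N * R L N\<bar>"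
    unfolding sandwich_def mat_mul_def mat_transp_def by (simp add: sum_distrib_right)
  also have "\<dots> \<le> (\<Sum>N\<in>Q. \<Sum>M\<in>Q. \<bar>R K M\<bar> * \<bar>R L N\<bar>)"
    by (intro order_trans[OF sum_abs] sum_mono order_trans[OF sum_abs] term_le)
  also have "\<dots> = (\<Sum>M\<in>Q. \<bar>R K M\<bar>) * (\<Sum>N\<in>Q. \<bar>R L N\<bar>)"
    unfolding sum_product by (rule sum.swap)
  finally show ?thesis .
qed

lemma abs_symbasis_le: "\<bar>symbasis s K L\<bar> \<le> 1"
proof -
  have "1 / sqrt 2 \<le> (1::real)" by (simp add: divide_le_eq)
  then show ?thesis unfolding symbasis_def by auto
qed

lemma abs_frob_symbasis_sandwich_le:
  "\<bar>frob q (symbasis s) (sandwich (qsets q) (mat_transp R) (symbasis s))\<bar>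
    \<le> (\<Sum>K\<in>qsets q. \<Sum>M\<in>qsets q. \<bar>R K M\<bar>)\<^sup>2"
proof -
  let ?Q = "qsets q" and ?E = "symbasis s"
  have "\<bar>frob q ?E (sandwich ?Q (mat_transp R) ?E)\<bar>
      \<le> (\<Sum>K\<in>?Q. \<Sum>L\<in>?Q. \<bar>?E K L\<bar> * \<bar>sandwich ?Q (mat_transp R) ?E K L\<bar>)"
    unfolding frob_def abs_mult[symmetric] by (intro order_trans[OF sum_abs] sum_mono sum_abs)
  also have "\<dots> \<le> (\<Sum>K\<in>?Q. \<Sum>L\<in>?Q. (\<Sum>M\<in>?Q. \<bar>R K M\<bar>) * (\<Sum>N\<in>?Q. \<bar>R L N\<bar>))"
    by (intro sum_mono order_trans[OF mult_left_le_one_le abs_sandwich_transp_le])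
      (auto simp: abs_symbasis_le)
  also have "\<dots> = (\<Sum>K\<in>?Q. \<Sum>M\<in>?Q. \<bar>R K M\<bar>)\<^sup>2"
    by (simp add: power2_eq_square sum_product)
  finally show ?thesis .
qed

lemma card_doubletons_le:
  assumes "finite Q"
  shows "card {{K, L} | K L. K \<in> Q \<and> L \<in> Q} \<le> card Q ^ 2"
proof -
  have "{{K, L} | K L. K \<in> Q \<and> L \<in> Q} = (\<lambda>(K, L). {K, L}) ` (Q \<times> Q)" by auto
  then show ?thesis
    using card_image_le[of "Q \<times> Q" "\<lambda>(K, L). {K, L}"] assms
    by (simp add: card_cartesian_product power2_eq_square)
qed

lemma sum_abs_entries_sq_le:
  "(\<Sum>K\<in>Q. \<Sum>M\<in>Q. \<bar>R K M\<bar>)\<^sup>2 \<le> real (card Q) ^ 2 * frob_sq Q R"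
proof -
  have "(\<Sum>K\<in>Q. \<Sum>M\<in>Q. \<bar>R K M\<bar>)\<^sup>2 = (\<Sum>p\<in>Q \<times> Q. \<bar>R (fst p) (snd p)\<bar> * 1)\<^sup>2"
    by (simp add: sum.cartesian_product split_def)
  also have "\<dots> \<le> (\<Sum>p\<in>Q \<times> Q. \<bar>R (fst p) (snd p)\<bar>\<^sup>2) * (\<Sum>p\<in>Q \<times> Q. 1\<^sup>2)"
    by (rule Cauchy_Schwarz_ineq_sum)
  also have "\<dots> = real (card Q) ^ 2 * frob_sq Q R"
    unfolding frob_sq_def by (simp add: sum.cartesian_product split_def card_cartesian_product power2_eq_square)
  finally show ?thesis .
qed

lemma abs_Mtrace_le:
  fixes R :: "('d::{finite,linorder}) qmat"
  assumes "\<forall>E. \<forall>I\<in>qsets q. \<forall>J\<in>qsets q. T E I J = sandwich (qsets q) (mat_transp R) E I J"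
  shows "\<bar>Mtrace q T\<bar> \<le> real (card (qsets q :: 'd set set)) ^ 4 * frob_sq (qsets q) R"
proof -
  let ?Q = "qsets q :: 'd set set"
  let ?S = "{{K, L} | K L. K \<in> ?Q \<and> L \<in> ?Q}"
  let ?a = "(\<Sum>K\<in>?Q. \<Sum>M\<in>?Q. \<bar>R K M\<bar>)\<^sup>2"
  have "frob q E (T E) = frob q E (sandwich ?Q (mat_transp R) E)" for E
    unfolding frob_def using assms by simp
  then have "\<bar>Mtrace q T\<bar> \<le> (\<Sum>s\<in>?S. ?a)"
    unfolding Mtrace_def by (intro order_trans[OF sum_abs] sum_mono) (simp add: abs_frob_symbasis_sandwich_le)
  also have "\<dots> \<le> real (card ?Q) ^ 2 * ?a"
    using card_doubletons_le[of ?Q] by (simp add: mult_right_mono flip: of_nat_power)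
  also have "\<dots> \<le> real (card ?Q) ^ 2 * (real (card ?Q) ^ 2 * frob_sq ?Q R)"
    by (intro mult_left_mono sum_abs_entries_sq_le) simp
  finally show ?thesis by (simp add: power_add[symmetric])
qed

definition shift_orbit :: "(nat \<Rightarrow> nat) \<Rightarrow> (nat \<Rightarrow> nat) set" where
  "shift_orbit x = range (\<lambda>k. (shift ^^ k) x)"

lemma funpow_shift: "(shift ^^ k) x = (\<lambda>m. x (m + k))"
  by (induction k) (auto simp: shift_def)

lemma Sig_funpow_shift: "x \<in> Sig t \<Longrightarrow> (shift ^^ k) x \<in> Sig t"
  unfolding Sig_def funpow_shift by auto

lemma periodic_mod:
  assumes "(shift ^^ p) x = x"
  shows "x m = x (m mod p)"
proof -
  have per: "x (n + p) = x n" for n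
    using fun_cong[OF assms[unfolded funpow_shift], of n] .
  have "x (r + p * j) = x r" for r j
  proof (induction j)
    case (Suc j)
    have "x (r + p * Suc j) = x (r + p * j + p)" by (simp add: algebra_simps)
    with Suc per show ?case by simp
  qed simp
  from this[of "m mod p" "m div p"] show ?thesis by simp
qed

lemma funpow_shift_mod:
  assumes "(shift ^^ p) x = x"
  shows "(shift ^^ k) x = (shift ^^ (k mod p)) x"
proof -
  have "x (m + k) = x (m + k mod p)" for m
    using periodic_mod[OF assms, of "m + k"] periodic_mod[OF assms, of "m + k mod p"]
    by (simp add: mod_add_right_eq)
  then show ?thesis by (simp add: funpow_shift)
qed

lemma periodic_funpow_shift:
  "(shift ^^ p) x = x \<Longrightarrow> (shift ^^ p) ((shift ^^ a) x) = (shift ^^ a) x"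
  by (metis add.commute comp_apply funpow_add)

lemma shift_orbit_eq_period:
  assumes "(shift ^^ p) x = x" "p > 0"
  shows "{(shift ^^ k) x | k. k < p} = shift_orbit x"
  unfolding shift_orbit_def using funpow_shift_mod[OF assms(1)] assms(2)
  by auto (metis mod_less_divisor)

lemma shift_orbit_of_mem:
  assumes "(shift ^^ p) x = x" "p > 0" "y \<in> shift_orbit x"
  shows "shift_orbit y = shift_orbit x"
proof -
  obtain a where y: "y = (shift ^^ a) x"
    using assms(3) unfolding shift_orbit_def by auto
  have "(shift ^^ k) y \<in> shift_orbit x" for k
    unfolding y shift_orbit_def by (metis comp_apply funpow_add rangeI)
  moreover have "(shift ^^ k) x \<in> shift_orbit y" for k
  proof -
    have "(shift ^^ k) x = (shift ^^ (k + p * a)) x"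
      using funpow_shift_mod[OF assms(1), of k] funpow_shift_mod[OF assms(1), of "k + p * a"] by simp
    also have "k + p * a = (k + (p - 1) * a) + a"
      using assms(2) by (cases p) auto
    finally have "(shift ^^ k) x = (shift ^^ (k + (p - 1) * a)) y"
      unfolding y by (simp only: funpow_add comp_apply)
    then show ?thesis unfolding shift_orbit_def by blast
  qed
  ultimately show ?thesis unfolding shift_orbit_def by blast
qed

lemma min_period_periodic:
  assumes "\<exists>n>0. (shift ^^ n) x = x"
  shows "min_period x > 0" "(shift ^^ min_period x) x = x"
proof -
  have "min_period x > 0 \<and> (shift ^^ min_period x) x = x"
    unfolding min_period_def by (rule LeastI_ex) (use assms in auto)
  then show "min_period x > 0" "(shift ^^ min_period x) x = x" by auto
qed

lemma per_orbits_rep: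
  assumes "\<tau> \<in> per_orbits t"
  shows "orb_rep \<tau> \<in> Sig t" "orb_len \<tau> > 0" "(shift ^^ orb_len \<tau>) (orb_rep \<tau>) = orb_rep \<tau>"
    "\<tau> = shift_orbit (orb_rep \<tau>)"
proof -
  obtain x where x: "x \<in> Sig t" "\<exists>n>0. (shift ^^ n) x = x"
    and \<tau>: "\<tau> = {(shift ^^ k) x | k. k < min_period x}"
    using assms unfolding per_orbits_def by auto
  note per = min_period_periodic[OF x(2)]
  have \<tau>_orbit: "\<tau> = shift_orbit x"
    unfolding \<tau> using shift_orbit_eq_period[OF per(2,1)] .
  then have "x \<in> \<tau>" unfolding shift_orbit_def by (metis funpow_0 rangeI)
  then have "orb_rep \<tau> \<in> shift_orbit x"
    unfolding orb_rep_def \<tau>_orbit by (rule someI[of "\<lambda>z. z \<in> shift_orbit x"])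
  then obtain a where a: "orb_rep \<tau> = (shift ^^ a) x"
    unfolding shift_orbit_def by auto
  show "orb_rep \<tau> \<in> Sig t" unfolding a using x(1) by (rule Sig_funpow_shift)
  have "\<exists>n>0. (shift ^^ n) (orb_rep \<tau>) = orb_rep \<tau>"
    unfolding a using per periodic_funpow_shift by blast
  then show "orb_len \<tau> > 0" "(shift ^^ orb_len \<tau>) (orb_rep \<tau>) = orb_rep \<tau>"
    unfolding orb_len_def by (rule min_period_periodic)+
  show "\<tau> = shift_orbit (orb_rep \<tau>)"
    using shift_orbit_of_mem[OF per(2,1) \<open>orb_rep \<tau> \<in> shift_orbit x\<close>] \<tau>_orbit by simp
qed

definition orb_word :: "(nat \<Rightarrow> nat) set \<Rightarrow> nat list" where
  "orb_word \<tau> = map (orb_rep \<tau>) [0..<orb_len \<tau>]"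

lemma orb_word_in_words: "\<tau> \<in> per_orbits t \<Longrightarrow> orb_word \<tau> \<in> words t (orb_len \<tau>)"
  using per_orbits_rep(1)[of \<tau> t] unfolding words_def orb_word_def Sig_def by auto

lemma inj_on_orb_word: "inj_on orb_word (per_orbits t)"
proof (rule inj_onI)
  fix \<tau> \<tau>' assume "\<tau> \<in> per_orbits t" "\<tau>' \<in> per_orbits t" and eq: "orb_word \<tau> = orb_word \<tau>'"
  note rep = per_orbits_rep[OF \<open>\<tau> \<in> per_orbits t\<close>] and rep' = per_orbits_rep[OF \<open>\<tau>' \<in> per_orbits t\<close>]
  have len: "orb_len \<tau> = orb_len \<tau>'"
    using arg_cong[OF eq, of length] unfolding orb_word_def by simp
  have "orb_rep \<tau> m = orb_rep \<tau>' m" for m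
  proof -
    have "orb_rep \<tau> (m mod orb_len \<tau>) = orb_rep \<tau>' (m mod orb_len \<tau>)"
      using eq rep(2) unfolding orb_word_def len by simp
    then show ?thesis
      using periodic_mod[OF rep(3), of m] periodic_mod[OF rep'(3), of m] len by simp
  qed
  then have "orb_rep \<tau> = orb_rep \<tau>'" by blast
  then show "\<tau> = \<tau>'" using rep(4) rep'(4) by simp
qed

lemma abs_orb_trace_le:
  fixes \<psi> :: "nat \<Rightarrow> real^('d::{finite,linorder}) \<Rightarrow> real^('d::{finite,linorder})"
  shows "\<bar>orb_trace q \<psi> TYPE('d) \<tau>\<bar>
    \<le> real (card (qsets q :: 'd set set)) ^ 4 * frob_sq (qsets q) (pullback_word q \<psi> (orb_word \<tau>))"
  unfolding orb_trace_def orb_word_def by (intro abs_Mtrace_le allI tPsiWord_eq_sandwich)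

lemma abs_pi'_le:
  fixes \<psi> :: "nat \<Rightarrow> real^('d::{finite,linorder}) \<Rightarrow> real^('d::{finite,linorder})"
  shows "\<bar>pi' t q \<psi> TYPE('d) y\<bar> \<le> real (card (qsets q :: 'd set set)) ^ 4 *
    (\<Sum>n\<le>nat \<lfloor>y\<rfloor>. \<Sum>w\<in>words t n. frob_sq (qsets q) (pullback_word q \<psi> w))"
proof -
  let ?c = "real (card (qsets q :: 'd set set)) ^ 4"
  let ?F = "\<lambda>w. ?c * frob_sq (qsets q) (pullback_word q \<psi> w)"
  define Ob where "Ob = {\<tau> \<in> per_orbits t. real (orb_len \<tau>) \<le> y}"
  have F_nonneg: "?F w \<ge> 0" for w
    unfolding frob_sq_def by (simp add: sum_nonneg)
  have "orb_word ` Ob \<subseteq> (\<Union>n\<le>nat \<lfloor>y\<rfloor>. words t n)"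
    unfolding Ob_def using orb_word_in_words le_nat_floor by fastforce
  have "\<bar>pi' t q \<psi> TYPE('d) y\<bar> \<le> (\<Sum>\<tau>\<in>Ob. ?F (orb_word \<tau>))"
    unfolding pi'_def Ob_def[symmetric] by (intro order_trans[OF sum_abs] sum_mono abs_orb_trace_le)
  also have "\<dots> = (\<Sum>w\<in>orb_word ` Ob. ?F w)"
  proof -
    have "inj_on orb_word Ob"
      using inj_on_orb_word[of t] by (rule inj_on_subset) (auto simp: Ob_def)
    then show ?thesis by (simp add: sum.reindex)
  qed
  also have "\<dots> \<le> (\<Sum>w\<in>(\<Union>n\<le>nat \<lfloor>y\<rfloor>. words t n). ?F w)"
    by (rule sum_mono2) (use \<open>orb_word ` Ob \<subseteq> _\<close> F_nonneg finite_words in auto)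
  also have "\<dots> = (\<Sum>n\<le>nat \<lfloor>y\<rfloor>. \<Sum>w\<in>words t n. ?F w)"
    by (rule sum.UNION_disjoint) (simp_all add: finite_words, auto simp: words_def)
  also have "\<dots> = ?c * (\<Sum>n\<le>nat \<lfloor>y\<rfloor>. \<Sum>w\<in>words t n. frob_sq (qsets q) (pullback_word q \<psi> w))"
    by (simp add: sum_distrib_left)
  finally show ?thesis .
qed

lemma sum_le_geometric_powr:
  fixes a :: "nat \<Rightarrow> real"
  assumes "\<beta> > 1" "\<forall>n. 0 \<le> a n" "\<forall>n. a n \<le> K * \<beta> ^ n" "y \<ge> 0"
  shows "(\<Sum>n\<le>nat \<lfloor>y\<rfloor>. a n) \<le> K * \<beta> / (\<beta> - 1) * \<beta> powr y"
proof -
  let ?N = "nat \<lfloor>y\<rfloor>"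
  have "K \<ge> 0" using assms(2,3)[rule_format, of 0] by simp
  have "\<beta> ^ ?N \<le> \<beta> powr y"
    using assms(1,4) by (simp add: powr_realpow[symmetric])
  then have "\<beta> * \<beta> ^ ?N \<le> \<beta> * \<beta> powr y"
    using assms(1) by (intro mult_left_mono) auto
  then have "\<beta> ^ Suc ?N - 1 \<le> \<beta> * \<beta> powr y"
    by simp
  have "(\<Sum>n\<le>?N. a n) \<le> K * (\<Sum>n<Suc ?N. \<beta> ^ n)"
    using assms(3) by (simp add: sum_distrib_left lessThan_Suc_atMost sum_mono)
  also have "\<dots> = K * ((\<beta> ^ Suc ?N - 1) / (\<beta> - 1))"
    using assms(1) by (subst geometric_sum) auto
  also have "\<dots> \<le> K * (\<beta> * \<beta> powr y / (\<beta> - 1))"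
    using assms(1) \<open>K \<ge> 0\<close> \<open>\<beta> ^ Suc ?N - 1 \<le> \<beta> * \<beta> powr y\<close>
    by (intro mult_left_mono divide_right_mono) auto
  finally show ?thesis by simp
qed

lemma abs_pi'_le_powr:
  fixes \<psi> :: "nat \<Rightarrow> real^('d::{finite,linorder}) \<Rightarrow> real^('d::{finite,linorder})"
  assumes "pos_eigen t q \<psi> TYPE('d) \<beta>" "\<beta> > 1"
  obtains C where "\<forall>y\<ge>0. \<bar>pi' t q \<psi> TYPE('d) y\<bar> \<le> C * \<beta> powr y"
proof (cases "t = 0")
  case True
  then have "per_orbits t = {}"
    unfolding per_orbits_def Sig_def by auto
  then show ?thesis by (intro that[of 0]) (simp add: pi'_def)
next
  case False
  then obtain K where K: "\<forall>n. (\<Sum>w\<in>words t n. frob_sq (qsets q) (pullback_word q \<psi> w)) \<le> K * \<beta> ^ n"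
    using pos_eigen_sum_words_le[OF assms(1)] by blast
  let ?c = "real (card (qsets q :: 'd set set)) ^ 4"
  have "\<bar>pi' t q \<psi> TYPE('d) y\<bar> \<le> ?c * (K * \<beta> / (\<beta> - 1) * \<beta> powr y)" if "y \<ge> 0" for y
  proof -
    have "(\<Sum>n\<le>nat \<lfloor>y\<rfloor>. \<Sum>w\<in>words t n. frob_sq (qsets q) (pullback_word q \<psi> w))
        \<le> K * \<beta> / (\<beta> - 1) * \<beta> powr y"
      by (rule sum_le_geometric_powr[OF assms(2) _ K that]) (simp add: frob_sq_def sum_nonneg)
    then show ?thesis
      using abs_pi'_le[of t q \<psi> y] by (meson mult_left_mono of_nat_0_le_iff order_trans zero_le_power)
  qed
  then show ?thesis by (intro that[of "?c * (K * \<beta> / (\<beta> - 1))"]) (simp add: mult.assoc)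
qed

lemma tendsto_zero_div_faster_powr:
  fixes f :: "real \<Rightarrow> real"
  assumes "\<beta> > 1" "\<gamma> > 1" "\<forall>y\<ge>0. \<bar>f y\<bar> \<le> C * \<beta> powr y"
  shows "((\<lambda>y. f y / \<beta> powr (\<gamma> * y)) \<longlongrightarrow> 0) at_top"
proof (rule Lim_null_comparison)
  show "\<forall>\<^sub>F y in at_top. norm (f y / \<beta> powr (\<gamma> * y)) \<le> C * exp ((1 - \<gamma>) * ln \<beta> * y)"
    using eventually_ge_at_top[of 0]
  proof eventually_elim
    case (elim y)
    have "norm (f y / \<beta> powr (\<gamma> * y)) \<le> C * \<beta> powr y / \<beta> powr (\<gamma> * y)"
      using assms(1,3) elim by (simp add: divide_right_mono)
    also have "\<dots> = C * exp ((1 - \<gamma>) * ln \<beta> * y)"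
      using assms(1) by (simp add: powr_def exp_diff algebra_simps)
    finally show ?case .
  qed
  have "filterlim (\<lambda>y. (1 - \<gamma>) * ln \<beta> * y) at_bot at_top"
    using assms(1,2) by (intro filterlim_tendsto_neg_mult_at_bot[OF tendsto_const _ filterlim_ident])
      (simp add: mult_neg_pos)
  then have "((\<lambda>y. exp ((1 - \<gamma>) * ln \<beta> * y)) \<longlongrightarrow> 0) at_top"
    by (rule filterlim_compose[OF exp_at_bot])
  then show "((\<lambda>y. C * exp ((1 - \<gamma>) * ln \<beta> * y)) \<longlongrightarrow> 0) at_top"
    by (simp add: tendsto_mult_right_zero)
qed

theorem lemma3p4:
  fixes t q :: nat and \<psi> :: "nat \<Rightarrow> real^('d::{finite,linorder}) \<Rightarrow> real^('d::{finite,linorder})"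
    and \<beta> \<gamma>' :: real
  assumes aff: "\<forall>i\<in>{1..t}. affine_bij (\<psi> i)"
    and lip: "\<forall>i\<in>{1..t}. \<exists>C<1. C-lipschitz_on UNIV (\<psi> i)"
    and q: "1 \<le> q" "q \<le> CARD(('d::{finite,linorder}))"
    and nd: "ND t q \<psi> TYPE('d)"
    and beta0: "pos_eigen t q \<psi> TYPE('d) \<beta>"
    and beta1: "\<beta> > 1"
    and gam: "\<gamma>' > 1"
  shows "((\<lambda>y. pi' t q \<psi> TYPE('d) y / \<beta> powr (\<gamma>' * y)) \<longlongrightarrow> 0) at_top"
proof -
  obtain C where "\<forall>y\<ge>0. \<bar>pi' t q \<psi> TYPE('d) y\<bar> \<le> C * \<beta> powr y"
    using abs_pi'_le_powr[OF beta0 beta1] by blast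
  then show ?thesis
    using tendsto_zero_div_faster_powr[OF beta1 gam] by blast
qed

end
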